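(* Let $c,d\in\mathbb{R}^n$ be distinct nonzero vectors such that the line segment $[c,d]$ does not contain $0$. Run the following iteration: if $c^Td>0$, terminate (declaring $0\notin[c,d]$); otherwise set $e=c-d$, $\beta=c^Te$, $d_+=d-(c^Td)\big(\frac{e}{\beta}-\frac{c}{\|c\|\sqrt\beta}\big)$, $c_+=c-(c^Tc)\big(\frac{e}{\beta}-\frac{c}{\|c\|\sqrt\beta}\big)$, then replace $c$ by $d_+$ and $d$ by $c_+$, and repeat. Then the iteration terminates (with the correct declaration $0\notin[c,d]$) after a number of iterations not exceeding $$\frac{\|c-d\|^4}{\|c\|^2\|d\|^2-(c^Td)^2},$$ where $c,d$ here denote the original vectors.
   Context: $[c,d]$ denotes the closed line segment joining $c$ and $d$; $\|\cdot\|$ is the Euclidean norm. *)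

theory Defs
  imports "HOL-Analysis.Analysis"
begin

definition seg_step :: "('a::real_inner) \<times> 'a \<Rightarrow> 'a \<times> 'a" where
  "seg_step p = (let c = fst p; d = snd p; e = c - d; \<beta> = c \<bullet> e;
                     w = (1 / \<beta>) *\<^sub>R e - (1 / (norm c * sqrt \<beta>)) *\<^sub>R c;
                     dp = d - (c \<bullet> d) *\<^sub>R w;
                     cp = c - (c \<bullet> c) *\<^sub>R w
                 in (dp, cp))"

definition seg_iter :: "nat \<Rightarrow> ('a::real_inner) \<times> 'a \<Rightarrow> 'a \<times> 'a" where
  "seg_iter k p = (seg_step ^^ k) p"

end

theory Submission
  imports Defs
begin

text \<open>Write \<open>g(c, d) = \<parallel>c\<parallel>\<^sup>2\<parallel>d\<parallel>\<^sup>2 - (c \<bullet> d)\<^sup>2\<close> for the Gram determinant and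
  \<open>\<Phi>(c, d) = \<parallel>c - d\<parallel>\<^sup>4 / g(c, d)\<close>. Let \<open>r\<close> be the component of \<open>d\<close> orthogonal to \<open>c\<close> and
  \<open>\<beta> = c \<bullet> (c - d)\<close>. A step maps the pair to \<open>(d\<^sub>+, c\<^sub>+)\<close> with
  \<open>c\<^sub>+ = (\<parallel>c\<parallel>/\<surd>\<beta>) c + (\<parallel>c\<parallel>\<^sup>2/\<beta>) r\<close> and \<open>d\<^sub>+ - c\<^sub>+\<close> a multiple of \<open>c\<close>; hence
  \<open>\<parallel>d\<^sub>+ - c\<^sub>+\<parallel>\<^sup>2 = \<beta>\<close> and \<open>g(d\<^sub>+, c\<^sub>+) = (\<parallel>c\<parallel>\<^sup>2/\<beta>) g(c, d)\<close>. When \<open>c \<bullet> d \<le> 0\<close> we have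
  \<open>\<parallel>c\<parallel>\<^sup>2 \<le> \<beta>\<close>, and together with \<open>\<parallel>c\<parallel>\<^sup>2\<parallel>c - d\<parallel>\<^sup>2 = \<beta>\<^sup>2 + g(c, d)\<close> this gives
  \<open>\<Phi>(d\<^sub>+, c\<^sub>+) \<le> \<Phi>(c, d) - 1\<close>. Since \<open>\<Phi> \<ge> 0\<close>, and \<open>g(c, d) > 0\<close> when \<open>0 \<notin> [c, d]\<close> and
  \<open>c \<bullet> d \<le> 0\<close>, the iteration stops after at most \<open>\<Phi>(c, d)\<close> steps.\<close>

definition gram :: "'a::real_inner \<Rightarrow> 'a \<Rightarrow> real" where
  "gram u v = (u \<bullet> u) * (v \<bullet> v) - (u \<bullet> v)^2"

lemma gram_commute: "gram u v = gram v u"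
  unfolding gram_def by (simp add: inner_commute)

lemma gram_nonneg: "gram u v \<ge> 0"
  unfolding gram_def using Cauchy_Schwarz_ineq[of u v] by simp

lemma gram_eq_norms: "gram u v = (norm u)^2 * (norm v)^2 - (u \<bullet> v)^2"
  unfolding gram_def by (simp add: power2_norm_eq_inner)

lemma gram_add_scaleR: "gram u (v + t *\<^sub>R u) = gram u v"
  unfolding gram_def by (simp add: inner_add inner_commute algebra_simps power2_eq_square)

lemma gram_orthogonal_combination:
  assumes "u \<bullet> r = 0"
  shows "gram (a *\<^sub>R u + b *\<^sub>R r) r = a^2 * gram u r"
  using assms unfolding gram_def
  by (simp add: inner_add inner_commute algebra_simps power2_eq_square)

lemma origin_in_segment_if_opposite:
  fixes c d :: "'a::real_normed_vector"
  assumes "norm d *\<^sub>R c + norm c *\<^sub>R d = 0" and "c \<noteq> 0"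
  shows "0 \<in> closed_segment c d"
proof -
  define u where "u = norm c / (norm c + norm d)"
  have pos: "norm c + norm d > 0" using assms(2) by (simp add: add_pos_nonneg)
  have "(1 - u) *\<^sub>R c + u *\<^sub>R d = (1 / (norm c + norm d)) *\<^sub>R (norm d *\<^sub>R c + norm c *\<^sub>R d)"
    using pos by (simp add: u_def field_simps scaleR_add_right)
  then have "0 = (1 - u) *\<^sub>R c + u *\<^sub>R d" using assms(1) by simp
  moreover have "0 \<le> u" "u \<le> 1" unfolding u_def using pos by auto
  ultimately show ?thesis unfolding in_segment(1) by blast
qed

lemma gram_pos_if_origin_notin_segment:
  fixes c d :: "'a::real_inner"
  assumes "0 \<notin> closed_segment c d" and "c \<bullet> d \<le> 0"
  shows "gram c d > 0"
proof (rule ccontr)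
  assume "\<not> gram c d > 0"
  then have "(c \<bullet> d)^2 = (norm c * norm d)^2"
    using gram_nonneg[of c d] by (simp add: gram_eq_norms power_mult_distrib)
  then have "(- c) \<bullet> d = norm (- c) * norm d"
    using assms(2) power2_eq_iff_nonneg[of "- (c \<bullet> d)" "norm c * norm d"] by simp
  then have "norm d *\<^sub>R c + norm c *\<^sub>R d = 0"
    unfolding norm_cauchy_schwarz_eq by (simp add: algebra_simps)
  moreover have "c \<noteq> 0" using assms(1) by auto
  ultimately show False using origin_in_segment_if_opposite assms(1) by blast
qed

lemma seg_step_decomposition:
  fixes c d :: "'a::real_inner"
  assumes "c \<noteq> 0" and "c \<bullet> d \<le> 0"
  defines "\<beta> \<equiv> c \<bullet> (c - d)" and "r \<equiv> d - ((c \<bullet> d) / (c \<bullet> c)) *\<^sub>R c"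
  shows "snd (seg_step (c, d)) = (norm c / sqrt \<beta>) *\<^sub>R c + ((c \<bullet> c) / \<beta>) *\<^sub>R r"
    and "fst (seg_step (c, d)) = r + ((c \<bullet> d) / (c \<bullet> c)) *\<^sub>R snd (seg_step (c, d))"
    and "fst (seg_step (c, d)) - snd (seg_step (c, d)) = - (sqrt \<beta> / norm c) *\<^sub>R c"
proof -
  define x where "x = c \<bullet> c"
  define z where "z = c \<bullet> d"
  have x_pos: "x > 0" using assms(1) by (simp add: x_def)
  have \<beta>_eq: "\<beta> = x - z" by (simp add: \<beta>_def x_def z_def inner_diff_right)
  have \<beta>_pos: "\<beta> > 0" using x_pos assms(2) by (simp add: \<beta>_eq z_def)
  have norm_sq: "(norm c)^2 = x" by (simp add: x_def power2_norm_eq_inner)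
  have norm_pos: "norm c > 0" using assms(1) by simp
  define w where "w = (1 / \<beta>) *\<^sub>R (c - d) - (1 / (norm c * sqrt \<beta>)) *\<^sub>R c"
  have step: "seg_step (c, d) = (d - z *\<^sub>R w, c - x *\<^sub>R w)"
    by (simp add: seg_step_def w_def \<beta>_def x_def z_def Let_def)
  have "c - x *\<^sub>R w = (1 - x/\<beta> + x/(norm c * sqrt \<beta>) + (x/\<beta>)*(z/x)) *\<^sub>R c + (x/\<beta>) *\<^sub>R r"
    by (simp add: w_def r_def x_def z_def algebra_simps)
  also have "1 - x/\<beta> + x/(norm c * sqrt \<beta>) + (x/\<beta>)*(z/x) = norm c / sqrt \<beta>"
  proof -
    have "1 - x/\<beta> + (x/\<beta>)*(z/x) = 0"
      using x_pos \<beta>_pos by (simp add: \<beta>_eq field_simps)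
    moreover have "x/(norm c * sqrt \<beta>) = norm c / sqrt \<beta>"
      using norm_pos by (simp add: norm_sq[symmetric] power2_eq_square)
    ultimately show ?thesis by simp
  qed
  finally show "snd (seg_step (c, d)) = (norm c / sqrt \<beta>) *\<^sub>R c + ((c \<bullet> c) / \<beta>) *\<^sub>R r"
    by (simp add: step x_def)
  have "(z/x) *\<^sub>R (c - x *\<^sub>R w) = (z/x) *\<^sub>R c - z *\<^sub>R w"
    using x_pos by (simp add: algebra_simps)
  then show "fst (seg_step (c, d)) = r + ((c \<bullet> d) / (c \<bullet> c)) *\<^sub>R snd (seg_step (c, d))"
    by (simp add: step r_def x_def z_def)
  have "d - z *\<^sub>R w - (c - x *\<^sub>R w) = \<beta> *\<^sub>R w - (c - d)"
    by (simp add: \<beta>_eq algebra_simps)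
  also have "\<dots> = (- (\<beta> / (norm c * sqrt \<beta>))) *\<^sub>R c"
    using \<beta>_pos by (simp add: w_def algebra_simps)
  also have "\<beta> / (norm c * sqrt \<beta>) = sqrt \<beta> / norm c"
    using \<beta>_pos norm_pos by (simp add: field_simps)
  finally show "fst (seg_step (c, d)) - snd (seg_step (c, d)) = - (sqrt \<beta> / norm c) *\<^sub>R c"
    by (simp add: step)
qed

lemma seg_step_norm_diff:
  fixes c d :: "'a::real_inner"
  assumes "c \<noteq> 0" and "c \<bullet> d \<le> 0"
  shows "(norm (fst (seg_step (c, d)) - snd (seg_step (c, d))))^2 = c \<bullet> (c - d)"
proof -
  have "c \<bullet> (c - d) = c \<bullet> c - c \<bullet> d"
    by (simp add: inner_diff_right)
  then have "c \<bullet> (c - d) \<ge> 0"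
    using assms(2) inner_ge_zero[of c] by linarith
  then show ?thesis
    using assms by (simp add: seg_step_decomposition(3) power_mult_distrib power_divide)
qed

lemma seg_step_gram:
  fixes c d :: "'a::real_inner"
  assumes "c \<noteq> 0" and "c \<bullet> d \<le> 0"
  shows "gram (fst (seg_step (c, d))) (snd (seg_step (c, d))) = (c \<bullet> c) / (c \<bullet> (c - d)) * gram c d"
proof -
  define \<beta> where "\<beta> = c \<bullet> (c - d)"
  define r where "r = d - ((c \<bullet> d) / (c \<bullet> c)) *\<^sub>R c"
  let ?dp = "fst (seg_step (c, d))" and ?cp = "snd (seg_step (c, d))"
  have "c \<bullet> c > 0" using assms(1) by simp
  moreover have "\<beta> = c \<bullet> c - c \<bullet> d" by (simp add: \<beta>_def inner_diff_right)
  ultimately have \<beta>_pos: "\<beta> > 0" using assms(2) by linarith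
  have c_perp_r: "c \<bullet> r = 0" using assms(1) by (simp add: r_def inner_diff_right)
  have "gram ?dp ?cp = gram ?cp (r + ((c \<bullet> d) / (c \<bullet> c)) *\<^sub>R ?cp)"
    using seg_step_decomposition(2)[OF assms] by (simp add: gram_commute r_def)
  also have "\<dots> = gram ?cp r"
    by (simp add: gram_add_scaleR add.commute)
  also have "\<dots> = (norm c / sqrt \<beta>)^2 * gram c r"
    using seg_step_decomposition(1)[OF assms] gram_orthogonal_combination[OF c_perp_r]
    by (simp add: \<beta>_def r_def)
  also have "gram c r = gram c d"
    using gram_add_scaleR[of c r "(c \<bullet> d) / (c \<bullet> c)"] by (simp add: r_def)
  also have "(norm c / sqrt \<beta>)^2 = (c \<bullet> c) / \<beta>"
    using \<beta>_pos by (simp add: power_divide power2_norm_eq_inner)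
  finally show ?thesis by (simp add: \<beta>_def)
qed

definition seg_potential :: "('a::real_inner) \<times> 'a \<Rightarrow> real" where
  "seg_potential p = (norm (fst p - snd p))^4 / gram (fst p) (snd p)"

lemma power4_eq_square_square: "(a::real)^4 = (a^2)^2"
  by simp

lemma seg_potential_nonneg: "seg_potential p \<ge> 0"
  unfolding seg_potential_def by (simp add: gram_nonneg)

lemma cube_le_square_gap:
  fixes x \<beta> g D :: real
  assumes "0 < x" and "x \<le> \<beta>" and "0 \<le> g" and "x * D = \<beta>^2 + g"
  shows "\<beta>^3 \<le> x * D^2 - x * g"
proof -
  have "\<beta>^3 * (\<beta> - x) \<ge> 0" using assms(1,2) by simp
  moreover have "g * (\<beta>^2 - x^2) \<ge> 0" using assms(1-3) by (simp add: power_mono)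
  moreover have "g * \<beta>^2 \<ge> 0" using assms(3) by simp
  moreover have "x * (x * D^2 - x * g) = x * \<beta>^3 + \<beta>^3 * (\<beta> - x) + g * (\<beta>^2 - x^2) + g^2 + g * \<beta>^2"
    using assms(4) by algebra
  ultimately have "x * \<beta>^3 \<le> x * (x * D^2 - x * g)" using zero_le_power2[of g] by linarith
  then show ?thesis using assms(1) by simp
qed

lemma seg_step_potential_decrease:
  fixes c d :: "'a::real_inner"
  assumes "gram c d > 0" and "c \<bullet> d \<le> 0"
  shows "gram (fst (seg_step (c, d))) (snd (seg_step (c, d))) > 0"
    and "seg_potential (seg_step (c, d)) \<le> seg_potential (c, d) - 1"
proof -
  define x where "x = c \<bullet> c"
  define \<beta> where "\<beta> = c \<bullet> (c - d)"
  define D where "D = (norm (c - d))^2"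
  define g where "g = gram c d"
  have c_nz: "c \<noteq> 0" using assms(1) by (auto simp: gram_def)
  have x_pos: "x > 0" using c_nz by (simp add: x_def)
  have x_le: "x \<le> \<beta>" using assms(2) by (simp add: x_def \<beta>_def inner_diff_right)
  have g_pos: "g > 0" using assms(1) by (simp add: g_def)
  have gram_step: "gram (fst (seg_step (c, d))) (snd (seg_step (c, d))) = x / \<beta> * g"
    using seg_step_gram[OF c_nz assms(2)] by (simp add: x_def \<beta>_def g_def)
  then show "gram (fst (seg_step (c, d))) (snd (seg_step (c, d))) > 0"
    using x_pos x_le g_pos by simp
  have "x * D = \<beta>^2 + gram c (c - d)"
    by (simp add: gram_def x_def D_def \<beta>_def power2_norm_eq_inner)
  also have "gram c (c - d) = g"
    by (simp add: g_def gram_def inner_diff_right inner_commute power2_eq_square algebra_simps)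
  finally have "\<beta>^3 \<le> x * D^2 - x * g"
    using cube_le_square_gap x_pos x_le g_pos by simp
  then have "\<beta>^3 / (x * g) \<le> (x * D^2 - x * g) / (x * g)"
    using x_pos g_pos by (simp add: divide_right_mono)
  also have "\<dots> = D^2 / g - 1"
    using x_pos g_pos by (simp add: field_simps)
  finally have "\<beta>^3 / (x * g) \<le> D^2 / g - 1" .
  moreover have "seg_potential (seg_step (c, d)) = \<beta>^2 / (x / \<beta> * g)"
    unfolding seg_potential_def power4_eq_square_square
    by (simp only: seg_step_norm_diff[OF c_nz assms(2)] gram_step \<beta>_def)
  moreover have "\<beta>^2 / (x / \<beta> * g) = \<beta>^3 / (x * g)"
    by (simp add: divide_divide_eq_right power2_eq_square power3_eq_cube)
  moreover have "seg_potential (c, d) = D^2 / g"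
    unfolding seg_potential_def power4_eq_square_square by (simp only: D_def g_def fst_conv snd_conv)
  ultimately show "seg_potential (seg_step (c, d)) \<le> seg_potential (c, d) - 1"
    by linarith
qed

lemma seg_iter_Suc: "seg_iter (Suc j) p = seg_step (seg_iter j p)"
  by (simp add: seg_iter_def)

lemma seg_iter_potential_bound:
  fixes c d :: "'a::real_inner"
  assumes "gram c d > 0"
    and "\<forall>j<k. fst (seg_iter j (c, d)) \<bullet> snd (seg_iter j (c, d)) \<le> 0"
  shows "gram (fst (seg_iter k (c, d))) (snd (seg_iter k (c, d))) > 0
    \<and> seg_potential (seg_iter k (c, d)) \<le> seg_potential (c, d) - real k"
  using assms(2)
proof (induction k)
  case 0
  then show ?case using assms(1) by (simp add: seg_iter_def)
next
  case (Suc k)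
  obtain u v where uv: "seg_iter k (c, d) = (u, v)" by fastforce
  have IH: "gram u v > 0" "seg_potential (u, v) \<le> seg_potential (c, d) - real k"
    using Suc uv by auto
  have "u \<bullet> v \<le> 0" using Suc.prems uv by (metis fst_conv snd_conv lessI)
  then show ?case
    using seg_step_potential_decrease[OF IH(1)] IH(2) by (simp add: seg_iter_Suc uv)
qed

lemma seg_iter_terminates:
  fixes c d :: "'a::real_inner"
  assumes "0 \<notin> closed_segment c d"
  shows "\<exists>k. (\<forall>j<k. fst (seg_iter j (c, d)) \<bullet> snd (seg_iter j (c, d)) \<le> 0)
    \<and> fst (seg_iter k (c, d)) \<bullet> snd (seg_iter k (c, d)) > 0
    \<and> real k \<le> seg_potential (c, d)"
proof -
  let ?P = "\<lambda>k. fst (seg_iter k (c, d)) \<bullet> snd (seg_iter k (c, d)) > 0"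
  have bound: "real k \<le> seg_potential (c, d)" if "\<forall>j<k. \<not> ?P j" for k
  proof (cases "c \<bullet> d > 0")
    case True
    then have "k = 0" using that[rule_format, of 0] by (auto simp: seg_iter_def)
    then show ?thesis by (simp add: seg_potential_nonneg)
  next
    case False
    then have "gram c d > 0" using gram_pos_if_origin_notin_segment[OF assms] by simp
    moreover have "\<forall>j<k. fst (seg_iter j (c, d)) \<bullet> snd (seg_iter j (c, d)) \<le> 0"
      using that by (simp add: not_less)
    ultimately have "seg_potential (seg_iter k (c, d)) \<le> seg_potential (c, d) - real k"
      using seg_iter_potential_bound by blast
    then show ?thesis using seg_potential_nonneg[of "seg_iter k (c, d)"] by linarith
  qed
  have "\<exists>k. ?P k"
  proof (rule ccontr)
    assume "\<nexists>k. ?P k"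
    then have "real (nat \<lceil>seg_potential (c, d)\<rceil> + 1) \<le> seg_potential (c, d)"
      using bound by blast
    then show False by linarith
  qed
  then have "?P (LEAST k. ?P k)" by (rule LeastI_ex)
  moreover have "\<forall>j < (LEAST k. ?P k). \<not> ?P j" using not_less_Least by blast
  moreover from this have "\<forall>j < (LEAST k. ?P k). fst (seg_iter j (c, d)) \<bullet> snd (seg_iter j (c, d)) \<le> 0"
    by (simp add: not_less)
  ultimately show ?thesis using bound by blast
qed

theorem mainTheorem11:
  fixes c d :: "real ^ 'n"
  assumes "c \<noteq> 0" and "d \<noteq> 0" and "c \<noteq> d"
    and "0 \<notin> closed_segment c d"
  shows "\<exists>k::nat.
           (\<forall>j<k. fst (seg_iter j (c, d)) \<bullet> snd (seg_iter j (c, d)) \<le> 0)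
         \<and> fst (seg_iter k (c, d)) \<bullet> snd (seg_iter k (c, d)) > 0
         \<and> real k \<le> (norm (c - d)) ^ 4 / ((norm c)^2 * (norm d)^2 - (c \<bullet> d)^2)"
  using seg_iter_terminates[OF assms(4)]
  unfolding seg_potential_def gram_eq_norms fst_conv snd_conv .

end
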